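(* For all logarithmic hypermonomials $\mathfrak{m},\mathfrak{n}\in\mathfrak{L}$: (i) $(\mathfrak{m}\mathfrak{n})^\dagger=\mathfrak{m}^\dagger+\mathfrak{n}^\dagger$, and $(\mathfrak{m}^t)^\dagger=t\mathfrak{m}^\dagger$ for $t\in\mathbb{R}$; (ii) $(\mathfrak{m}\mathfrak{n})'=\mathfrak{m}'\mathfrak{n}+\mathfrak{m}\mathfrak{n}'$; (iii) if $\mathfrak{m}\ne1$ then $\mathfrak{m}'\neq0$ and $\mathfrak{m}^\dagger\ne0$; (iv) if $\mathfrak{m}\prec1$ and $\mathfrak{n}\ne1$ then $\mathfrak{m}'\prec\mathfrak{n}^\dagger$; (v) if $\mathfrak{m}\prec\mathfrak{n}\ne1$ then $\mathfrak{m}'\prec\mathfrak{n}'$; (vi) if $\mathfrak{m}\in\mathfrak{L}_{<\alpha}$ then $\operatorname{supp}\mathfrak{m}'\subseteq\{\ell_\beta^\dagger:\beta<\alpha\}\,\mathfrak{m}$.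
   Context: Fix distinct symbols $\ell_\alpha$ for all ordinals. Exponent sequences $r=(r_\beta)$: reals over all ordinals, zero beyond some ordinal; monomials $\ell^r=\prod\ell_\beta^{r_\beta}$ form the abelian group $\mathfrak{L}$ ($\ell^r\ell^s=\ell^{r+s}$, $(\ell^r)^t=\ell^{tr}$), totally ordered by $\ell^r\prec\ell^s$ iff $r\ne s$ and $r_\beta<s_\beta$ at the least differing $\beta$; $\ell_\alpha$ has exponent $1$ at $\alpha$, else $0$. $\mathfrak{L}_{<\alpha}$: monomials with $r_\beta=0$ for $\beta\ge\alpha$. $\mathbb{L}_{<\alpha}=\mathbb{R}[[\mathfrak{L}_{<\alpha}]]$ is the Hahn field of real series over $\mathfrak{L}_{<\alpha}$ with well-based support, $\mathbb{L}=\bigcup\mathbb{L}_{<\alpha}$; for $f,g\in\mathbb{L}$, $f\prec g$ iff the largest monomial of $\operatorname{supp}f$ is $\prec$ that of $\operatorname{supp}g$ (with $0$ below all monomials). Define $\ell_\beta^\dagger=\prod_{\gamma\le\beta}\ell_\gamma^{-1}$ and for $\mathfrak{m}=\ell^r$: $\mathfrak{m}^\dagger=\sum_\beta r_\beta\ell_\beta^\dagger\in\mathbb{L}$ and $\mathfrak{m}'=\mathfrak{m}\,\mathfrak{m}^\dagger\in\mathbb{L}$. *)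

theory Defs
  imports Complex_Main
begin

text \<open>Ordinals are modelled by an arbitrary well-ordered type 'o; a logarithmic
hypermonomial ell^r is represented by its exponent sequence r :: 'o => real.\<close>

type_synonym 'o lmono = "'o \<Rightarrow> real"
type_synonym 'o lser = "'o lmono \<Rightarrow> real"

definition lm_one :: "'o lmono" where
  "lm_one = (\<lambda>_. 0)"

definition lm_mult :: "'o lmono \<Rightarrow> 'o lmono \<Rightarrow> 'o lmono" where
  "lm_mult r s = (\<lambda>\<beta>. r \<beta> + s \<beta>)"

definition lm_pow :: "'o lmono \<Rightarrow> real \<Rightarrow> 'o lmono" where
  "lm_pow r t = (\<lambda>\<beta>. t * r \<beta>)"

definition lm_less :: "'o::wellorder lmono \<Rightarrow> 'o lmono \<Rightarrow> bool" where
  "lm_less r s \<longleftrightarrow> r \<noteq> s \<and>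
     r (LEAST \<beta>. r \<beta> \<noteq> s \<beta>) < s (LEAST \<beta>. r \<beta> \<noteq> s \<beta>)"

definition lm_ell :: "'o \<Rightarrow> 'o lmono" where
  "lm_ell \<alpha> = (\<lambda>\<beta>. if \<beta> = \<alpha> then 1 else 0)"

definition lm_below :: "'o::wellorder \<Rightarrow> 'o lmono set" where
  "lm_below \<alpha> = {r. \<forall>\<beta>\<ge>\<alpha>. r \<beta> = 0}"

text \<open>ell_beta^dagger = prod_{gamma <= beta} ell_gamma^{-1}.\<close>
definition ell_dag :: "'o::wellorder \<Rightarrow> 'o lmono" where
  "ell_dag \<beta> = (\<lambda>\<gamma>. if \<gamma> \<le> \<beta> then -1 else 0)"

definition lsupp :: "'o lser \<Rightarrow> 'o lmono set" where
  "lsupp f = {m. f m \<noteq> 0}"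

definition well_based :: "'o::wellorder lmono set \<Rightarrow> bool" where
  "well_based S \<longleftrightarrow> \<not> (\<exists>g::nat \<Rightarrow> 'o lmono. (\<forall>n. g n \<in> S) \<and> (\<forall>n. lm_less (g n) (g (Suc n))))"

definition hahn :: "'o::wellorder lser set" where
  "hahn = {f. well_based (lsupp f)}"

definition ls_zero :: "'o lser" where
  "ls_zero = (\<lambda>_. 0)"

definition ls_add :: "'o lser \<Rightarrow> 'o lser \<Rightarrow> 'o lser" where
  "ls_add f g = (\<lambda>m. f m + g m)"

definition ls_scale :: "real \<Rightarrow> 'o lser \<Rightarrow> 'o lser" where
  "ls_scale t f = (\<lambda>m. t * f m)"

text \<open>Hahn series product (finite sums for well-based supports).\<close>
definition ls_mult :: "'o lser \<Rightarrow> 'o lser \<Rightarrow> 'o lser" where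
  "ls_mult f g = (\<lambda>n. \<Sum>p\<in>{p. f p \<noteq> 0 \<and> g (\<lambda>\<beta>. n \<beta> - p \<beta>) \<noteq> 0}.
                       f p * g (\<lambda>\<beta>. n \<beta> - p \<beta>))"

definition ls_mono :: "'o lmono \<Rightarrow> 'o lser" where
  "ls_mono m = (\<lambda>n. if n = m then 1 else 0)"

definition ls_lead :: "'o::wellorder lser \<Rightarrow> 'o lmono" where
  "ls_lead f = (THE m. m \<in> lsupp f \<and> (\<forall>n\<in>lsupp f. n = m \<or> lm_less n m))"

definition ls_less :: "'o::wellorder lser \<Rightarrow> 'o lser \<Rightarrow> bool" where
  "ls_less f g \<longleftrightarrow> g \<noteq> ls_zero \<and> (f = ls_zero \<or> lm_less (ls_lead f) (ls_lead g))"

text \<open>m^dagger = sum_beta r_beta ell_beta^dagger, coefficientwise (the ell_beta^dagger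
are pairwise distinct, so each coefficient is a sum over at most one beta).\<close>
definition lm_dag :: "'o::wellorder lmono \<Rightarrow> 'o lser" where
  "lm_dag r = (\<lambda>n. \<Sum>\<beta>\<in>{\<beta>. ell_dag \<beta> = n}. r \<beta>)"

definition lm_deriv :: "'o::wellorder lmono \<Rightarrow> 'o lser" where
  "lm_deriv m = ls_mult (ls_mono m) (lm_dag m)"

end

theory Submission
  imports Defs
begin

text \<open>The monomials \<open>\<ell>\<^sub>\<beta>\<^sup>\<dagger>\<close> strictly decrease in \<open>\<beta>\<close>, so they are pairwise distinct: for
\<open>\<mm> = \<ell>\<^sup>r\<close> the coefficient of \<open>\<mm>\<^sup>\<dagger> = \<Sum> r\<^sub>\<beta> \<ell>\<^sub>\<beta>\<^sup>\<dagger>\<close> at \<open>\<ell>\<^sub>\<beta>\<^sup>\<dagger>\<close> is just \<open>r\<^sub>\<beta>\<close>, and \<open>\<mm>'\<close> is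
\<open>\<mm>\<^sup>\<dagger>\<close> shifted by \<open>\<mm>\<close>. Parts (i), (ii), (iii) and (vi) are then coefficientwise identities.
For \<open>\<mm> \<noteq> 1\<close> let \<open>\<beta>\<^sub>0\<close> be the least index with \<open>r\<^sub>\<beta>\<^sub>0 \<noteq> 0\<close>; the leading monomial of
\<open>\<mm>\<^sup>\<dagger>\<close> is \<open>\<ell>\<^sub>\<beta>\<^sub>0\<^sup>\<dagger>\<close> and that of \<open>\<mm>'\<close> is \<open>\<ell>\<^sub>\<beta>\<^sub>0\<^sup>\<dagger> \<mm>\<close>. For (v), the factors \<open>\<ell>\<^sub>\<beta>\<^sub>0\<^sup>\<dagger>\<close>
and \<open>\<ell>\<^sub>\<beta>\<^sub>1\<^sup>\<dagger>\<close> attached to \<open>\<mm>\<close> and \<open>\<nn>\<close> agree at every index up to the first one where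
\<open>\<mm>\<close> and \<open>\<nn>\<close> differ, so they do not affect the comparison. For (iv), \<open>\<mm> \<prec> 1\<close> means
\<open>r\<^sub>\<beta>\<^sub>0 < 0\<close>: if \<open>\<beta>\<^sub>0 \<le> \<beta>\<^sub>1\<close> then \<open>\<ell>\<^sub>\<beta>\<^sub>0\<^sup>\<dagger> \<mm>\<close> and \<open>\<ell>\<^sub>\<beta>\<^sub>1\<^sup>\<dagger>\<close> first differ at \<open>\<beta>\<^sub>0\<close>, and
otherwise \<open>\<ell>\<^sub>\<beta>\<^sub>0\<^sup>\<dagger> \<mm> \<prec> \<ell>\<^sub>\<beta>\<^sub>0\<^sup>\<dagger> \<prec> \<ell>\<^sub>\<beta>\<^sub>1\<^sup>\<dagger>\<close>.\<close>

lemma lm_less_iff_at: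
  fixes r s :: "'o::wellorder lmono"
  assumes "\<forall>\<gamma><\<delta>. r \<gamma> = s \<gamma>" and "r \<delta> \<noteq> s \<delta>"
  shows "lm_less r s \<longleftrightarrow> r \<delta> < s \<delta>"
proof -
  have "(LEAST \<beta>. r \<beta> \<noteq> s \<beta>) = \<delta>"
    using assms by (intro Least_equality) (auto simp: not_le[symmetric])
  with assms(2) show ?thesis
    unfolding lm_less_def by auto
qed

lemma lm_lessI:
  fixes r s :: "'o::wellorder lmono"
  assumes "\<forall>\<gamma><\<delta>. r \<gamma> = s \<gamma>" and "r \<delta> < s \<delta>"
  shows "lm_less r s"
  using assms lm_less_iff_at[of \<delta> r s] by auto

lemma lm_lessE:
  fixes r s :: "'o::wellorder lmono"
  assumes "lm_less r s"
  obtains \<delta> where "\<forall>\<gamma><\<delta>. r \<gamma> = s \<gamma>" and "r \<delta> < s \<delta>"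
proof -
  let ?\<delta> = "LEAST \<beta>. r \<beta> \<noteq> s \<beta>"
  have "\<forall>\<gamma><?\<delta>. r \<gamma> = s \<gamma>"
    using not_less_Least by blast
  moreover have "r ?\<delta> < s ?\<delta>"
    using assms unfolding lm_less_def by blast
  ultimately show thesis
    using that by blast
qed

lemma lm_less_asym:
  fixes r s :: "'o::wellorder lmono"
  assumes "lm_less r s"
  shows "\<not> lm_less s r"
proof -
  obtain \<delta> where "\<forall>\<gamma><\<delta>. r \<gamma> = s \<gamma>" and "r \<delta> < s \<delta>"
    using assms by (rule lm_lessE)
  then show ?thesis
    using lm_less_iff_at[of \<delta> s r] by auto
qed

lemma lm_less_trans:
  fixes r s u :: "'o::wellorder lmono"
  assumes "lm_less r s" and "lm_less s u"
  shows "lm_less r u"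
proof -
  obtain \<delta> where \<delta>: "\<forall>\<gamma><\<delta>. r \<gamma> = s \<gamma>" "r \<delta> < s \<delta>"
    using assms(1) by (rule lm_lessE)
  obtain \<epsilon> where \<epsilon>: "\<forall>\<gamma><\<epsilon>. s \<gamma> = u \<gamma>" "s \<epsilon> < u \<epsilon>"
    using assms(2) by (rule lm_lessE)
  show ?thesis
  proof (rule lm_lessI)
    show "\<forall>\<gamma><min \<delta> \<epsilon>. r \<gamma> = u \<gamma>"
      using \<delta>(1) \<epsilon>(1) by simp
    show "r (min \<delta> \<epsilon>) < u (min \<delta> \<epsilon>)"
      using \<delta> \<epsilon> by (cases \<delta> \<epsilon> rule: linorder_cases) auto
  qed
qed

lemma lm_mult_commute: "lm_mult r s = lm_mult s r"
  by (simp add: lm_mult_def fun_eq_iff)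

lemma lm_mult_one [simp]: "lm_mult r lm_one = r"
  by (simp add: lm_mult_def lm_one_def)

lemma lm_less_mult_right_iff:
  fixes r s m :: "'o::wellorder lmono"
  shows "lm_less (lm_mult r m) (lm_mult s m) \<longleftrightarrow> lm_less r s"
  by (simp add: lm_less_def lm_mult_def fun_eq_iff)

lemma ell_dag_less:
  fixes \<beta> \<gamma> :: "'o::wellorder"
  assumes "\<beta> < \<gamma>"
  shows "lm_less (ell_dag \<gamma>) (ell_dag \<beta>)"
proof (rule lm_lessI)
  let ?\<delta> = "LEAST \<delta>. \<beta> < \<delta>"
  have "\<beta> < ?\<delta>" and "?\<delta> \<le> \<gamma>"
    using assms by (auto intro: LeastI Least_le)
  moreover have "\<forall>\<epsilon><?\<delta>. \<epsilon> \<le> \<beta>"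
    using not_less_Least not_le by blast
  ultimately show "\<forall>\<epsilon><?\<delta>. ell_dag \<gamma> \<epsilon> = ell_dag \<beta> \<epsilon>"
    and "ell_dag \<gamma> ?\<delta> < ell_dag \<beta> ?\<delta>"
    by (auto simp: ell_dag_def)
qed

lemma inj_ell_dag: "inj (ell_dag :: 'o::wellorder \<Rightarrow> 'o lmono)"
  by (rule injI) (metis lm_less_def ell_dag_less linorder_neqE)

text \<open>For \<open>r = lm_one\<close> this is \<open>LEAST\<close> of an empty predicate, an unspecified index.\<close>

definition lm_lead_index :: "'o::wellorder lmono \<Rightarrow> 'o" where
  "lm_lead_index r = (LEAST \<beta>. r \<beta> \<noteq> 0)"

lemma lm_lead_index_nonzero:
  assumes "r \<noteq> lm_one"
  shows "r (lm_lead_index r) \<noteq> 0"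
proof -
  obtain \<beta> where "r \<beta> \<noteq> 0"
    using assms by (auto simp: lm_one_def)
  then show ?thesis
    unfolding lm_lead_index_def by (rule LeastI)
qed

lemma lm_lead_index_le: "r \<beta> \<noteq> 0 \<Longrightarrow> lm_lead_index r \<le> \<beta>"
  unfolding lm_lead_index_def by (rule Least_le)

lemma less_lm_lead_index: "\<gamma> < lm_lead_index r \<Longrightarrow> r \<gamma> = 0"
  unfolding lm_lead_index_def using not_less_Least by blast

lemma lm_less_one_iff:
  fixes r :: "'o::wellorder lmono"
  assumes "r \<noteq> lm_one"
  shows "lm_less r lm_one \<longleftrightarrow> r (lm_lead_index r) < 0"
  using lm_less_iff_at[of "lm_lead_index r" r lm_one] assms
  by (simp add: lm_one_def less_lm_lead_index lm_lead_index_nonzero)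

lemma lm_dag_ell_dag: "lm_dag r (ell_dag \<beta>) = r \<beta>"
proof -
  have "{\<gamma>. ell_dag \<gamma> = ell_dag \<beta>} = {\<beta>}"
    using inj_ell_dag by (auto dest: injD)
  then show ?thesis
    unfolding lm_dag_def by simp
qed

lemma lm_dag_eq_0: "x \<notin> range ell_dag \<Longrightarrow> lm_dag r x = 0"
  unfolding lm_dag_def by (metis (mono_tags, lifting) empty_Collect_eq rangeI sum.empty)

lemma lsupp_lm_dag: "lsupp (lm_dag r) = ell_dag ` {\<beta>. r \<beta> \<noteq> 0}"
proof -
  have "lm_dag r x \<noteq> 0 \<longleftrightarrow> (\<exists>\<beta>. x = ell_dag \<beta> \<and> r \<beta> \<noteq> 0)" for x
    using lm_dag_eq_0[of x r] by (metis lm_dag_ell_dag rangeE)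
  then show ?thesis
    by (auto simp: lsupp_def)
qed

lemma ls_mult_mono_left: "ls_mult (ls_mono m) f x = f (\<lambda>\<beta>. x \<beta> - m \<beta>)"
proof -
  have "{p. ls_mono m p \<noteq> 0 \<and> f (\<lambda>\<beta>. x \<beta> - p \<beta>) \<noteq> 0}
       = (if f (\<lambda>\<beta>. x \<beta> - m \<beta>) \<noteq> 0 then {m} else {})"
    unfolding ls_mono_def by auto
  then show ?thesis
    unfolding ls_mult_def ls_mono_def by auto
qed

lemma ls_mult_mono_right: "ls_mult f (ls_mono m) x = f (\<lambda>\<beta>. x \<beta> - m \<beta>)"
proof -
  let ?c = "\<lambda>\<beta>. x \<beta> - m \<beta>"
  have shift: "(\<lambda>\<beta>. x \<beta> - p \<beta>) = m \<longleftrightarrow> p = ?c" for p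
    by (auto simp: fun_eq_iff algebra_simps)
  have "{p. f p \<noteq> 0 \<and> ls_mono m (\<lambda>\<beta>. x \<beta> - p \<beta>) \<noteq> 0} = (if f ?c \<noteq> 0 then {?c} else {})"
    unfolding ls_mono_def shift by auto
  then show ?thesis
    unfolding ls_mult_def by (simp add: ls_mono_def)
qed

lemma lsupp_ls_mult_mono: "lsupp (ls_mult (ls_mono m) f) = (\<lambda>p. lm_mult p m) ` lsupp f"
proof (intro equalityI subsetI)
  fix x assume "x \<in> lsupp (ls_mult (ls_mono m) f)"
  then have "(\<lambda>\<beta>. x \<beta> - m \<beta>) \<in> lsupp f"
    by (simp add: lsupp_def ls_mult_mono_left)
  moreover have "x = lm_mult (\<lambda>\<beta>. x \<beta> - m \<beta>) m"
    by (simp add: lm_mult_def)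
  ultimately show "x \<in> (\<lambda>p. lm_mult p m) ` lsupp f"
    by blast
next
  fix x assume "x \<in> (\<lambda>p. lm_mult p m) ` lsupp f"
  then show "x \<in> lsupp (ls_mult (ls_mono m) f)"
    by (auto simp: lsupp_def ls_mult_mono_left lm_mult_def)
qed

lemma lm_deriv_apply: "lm_deriv m x = lm_dag m (\<lambda>\<beta>. x \<beta> - m \<beta>)"
  unfolding lm_deriv_def by (rule ls_mult_mono_left)

lemma lsupp_lm_deriv: "lsupp (lm_deriv m) = (\<lambda>\<beta>. lm_mult (ell_dag \<beta>) m) ` {\<beta>. m \<beta> \<noteq> 0}"
  unfolding lm_deriv_def lsupp_ls_mult_mono lsupp_lm_dag by blast

definition ls_is_lead :: "'o::wellorder lser \<Rightarrow> 'o lmono \<Rightarrow> bool" where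
  "ls_is_lead f p \<longleftrightarrow> p \<in> lsupp f \<and> (\<forall>q\<in>lsupp f. q = p \<or> lm_less q p)"

lemma ls_lead_eqI:
  assumes "ls_is_lead f p"
  shows "ls_lead f = p"
  unfolding ls_lead_def
proof (rule the_equality)
  show "p \<in> lsupp f \<and> (\<forall>q\<in>lsupp f. q = p \<or> lm_less q p)"
    using assms unfolding ls_is_lead_def .
  fix q assume q: "q \<in> lsupp f \<and> (\<forall>q'\<in>lsupp f. q' = q \<or> lm_less q' q)"
  show "q = p"
  proof (rule ccontr)
    assume "q \<noteq> p"
    with assms q have "lm_less q p" and "lm_less p q"
      unfolding ls_is_lead_def by auto
    then show False
      using lm_less_asym by blast
  qed
qed

lemma ls_is_lead_nonzero:
  assumes "ls_is_lead f p"
  shows "f \<noteq> ls_zero"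
proof -
  have "f p \<noteq> 0"
    using assms by (simp add: ls_is_lead_def lsupp_def)
  then show ?thesis
    by (auto simp: ls_zero_def)
qed

lemma ls_lessI:
  assumes "ls_is_lead f p" and "ls_is_lead g q" and "lm_less p q"
  shows "ls_less f g"
  using assms by (simp add: ls_less_def ls_lead_eqI ls_is_lead_nonzero)

lemma ls_is_lead_mult_mono:
  assumes "ls_is_lead f p"
  shows "ls_is_lead (ls_mult (ls_mono m) f) (lm_mult p m)"
  using assms unfolding ls_is_lead_def lsupp_ls_mult_mono
  by (auto simp: lm_less_mult_right_iff)

lemma ls_is_lead_lm_dag:
  fixes r :: "'o::wellorder lmono"
  assumes "r \<noteq> lm_one"
  shows "ls_is_lead (lm_dag r) (ell_dag (lm_lead_index r))"
proof -
  let ?\<beta>\<^sub>0 = "lm_lead_index r"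
  have "ell_dag \<beta> = ell_dag ?\<beta>\<^sub>0 \<or> lm_less (ell_dag \<beta>) (ell_dag ?\<beta>\<^sub>0)" if "r \<beta> \<noteq> 0" for \<beta>
    using lm_lead_index_le[of r, OF that] ell_dag_less[of ?\<beta>\<^sub>0 \<beta>] by (cases "\<beta> = ?\<beta>\<^sub>0") auto
  then show ?thesis
    unfolding ls_is_lead_def lsupp_lm_dag using lm_lead_index_nonzero[OF assms] by blast
qed

lemma ls_is_lead_lm_deriv:
  fixes r :: "'o::wellorder lmono"
  assumes "r \<noteq> lm_one"
  shows "ls_is_lead (lm_deriv r) (lm_mult (ell_dag (lm_lead_index r)) r)"
  unfolding lm_deriv_def using assms by (intro ls_is_lead_mult_mono ls_is_lead_lm_dag)

lemma lm_dag_nonzero: "m \<noteq> lm_one \<Longrightarrow> lm_dag m \<noteq> ls_zero"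
  by (rule ls_is_lead_nonzero[OF ls_is_lead_lm_dag])

lemma lm_deriv_nonzero: "m \<noteq> lm_one \<Longrightarrow> lm_deriv m \<noteq> ls_zero"
  by (rule ls_is_lead_nonzero[OF ls_is_lead_lm_deriv])

lemma lm_dag_mult: "lm_dag (lm_mult m n) = ls_add (lm_dag m) (lm_dag n)"
  by (simp add: fun_eq_iff lm_dag_def ls_add_def lm_mult_def sum.distrib)

lemma lm_dag_pow: "lm_dag (lm_pow m t) = ls_scale t (lm_dag m)"
  by (simp add: fun_eq_iff lm_dag_def ls_scale_def lm_pow_def sum_distrib_left)

lemma lm_deriv_mult:
  "lm_deriv (lm_mult m n) = ls_add (ls_mult (lm_deriv m) (ls_mono n)) (ls_mult (ls_mono m) (lm_deriv n))"
  unfolding fun_eq_iff lm_deriv_apply lm_dag_mult ls_add_def ls_mult_mono_left ls_mult_mono_right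
  by (simp add: lm_mult_def algebra_simps)

lemma lm_deriv_one: "lm_deriv (lm_one :: 'o::wellorder lmono) = ls_zero"
  by (simp add: fun_eq_iff lm_deriv_apply lm_dag_def lm_one_def ls_zero_def)

lemma ell_dag_lead_index_mult_less_ell_dag:
  fixes m :: "'o::wellorder lmono"
  assumes "lm_less m lm_one"
  shows "lm_less (lm_mult (ell_dag (lm_lead_index m)) m) (ell_dag \<beta>)"
proof -
  let ?\<beta>\<^sub>0 = "lm_lead_index m"
  have "m \<noteq> lm_one"
    using assms by (simp add: lm_less_def)
  then have neg: "m ?\<beta>\<^sub>0 < 0"
    using assms lm_less_one_iff by blast
  show ?thesis
  proof (cases "?\<beta>\<^sub>0 \<le> \<beta>")
    case True
    show ?thesis
    proof (rule lm_lessI)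
      show "\<forall>\<gamma><?\<beta>\<^sub>0. lm_mult (ell_dag ?\<beta>\<^sub>0) m \<gamma> = ell_dag \<beta> \<gamma>"
        using True less_lm_lead_index[of _ m] by (auto simp: lm_mult_def ell_dag_def)
      show "lm_mult (ell_dag ?\<beta>\<^sub>0) m ?\<beta>\<^sub>0 < ell_dag \<beta> ?\<beta>\<^sub>0"
        using True neg by (simp add: lm_mult_def ell_dag_def)
    qed
  next
    case False
    have "lm_less (lm_mult m (ell_dag ?\<beta>\<^sub>0)) (lm_mult lm_one (ell_dag ?\<beta>\<^sub>0))"
      using assms by (simp only: lm_less_mult_right_iff)
    then have "lm_less (lm_mult (ell_dag ?\<beta>\<^sub>0) m) (ell_dag ?\<beta>\<^sub>0)"
      by (metis lm_mult_commute lm_mult_one)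
    moreover have "lm_less (ell_dag ?\<beta>\<^sub>0) (ell_dag \<beta>)"
      using False by (simp add: ell_dag_less)
    ultimately show ?thesis
      by (rule lm_less_trans)
  qed
qed

lemma ell_dag_lead_index_agree:
  fixes r s :: "'o::wellorder lmono"
  assumes "r \<noteq> lm_one" and "s \<noteq> lm_one" and "\<forall>\<gamma><\<delta>. r \<gamma> = s \<gamma>" and "\<gamma> \<le> \<delta>"
  shows "ell_dag (lm_lead_index r) \<gamma> = ell_dag (lm_lead_index s) \<gamma>"
proof (cases "lm_lead_index r = lm_lead_index s")
  case False
  let ?\<mu> = "min (lm_lead_index r) (lm_lead_index s)"
  have "r ?\<mu> \<noteq> s ?\<mu>"
    using False lm_lead_index_nonzero[OF assms(1)] lm_lead_index_nonzero[OF assms(2)]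
      less_lm_lead_index[of ?\<mu> r] less_lm_lead_index[of ?\<mu> s]
    by (cases "lm_lead_index r < lm_lead_index s") (auto simp: min_def)
  then have "\<delta> \<le> ?\<mu>"
    using assms(3) not_le by blast
  then have "\<gamma> \<le> lm_lead_index r" and "\<gamma> \<le> lm_lead_index s"
    using assms(4) by (auto intro: order.trans)
  then show ?thesis
    by (simp add: ell_dag_def)
qed simp

lemma ell_dag_lead_index_mult_less:
  fixes m n :: "'o::wellorder lmono"
  assumes "lm_less m n" and "m \<noteq> lm_one" and "n \<noteq> lm_one"
  shows "lm_less (lm_mult (ell_dag (lm_lead_index m)) m) (lm_mult (ell_dag (lm_lead_index n)) n)"
proof -
  obtain \<delta> where agree: "\<forall>\<gamma><\<delta>. m \<gamma> = n \<gamma>" and less: "m \<delta> < n \<delta>"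
    using assms(1) by (rule lm_lessE)
  have "ell_dag (lm_lead_index m) \<gamma> = ell_dag (lm_lead_index n) \<gamma>" if "\<gamma> \<le> \<delta>" for \<gamma>
    using ell_dag_lead_index_agree[OF assms(2,3) agree that] .
  then show ?thesis
    using agree less by (intro lm_lessI[of \<delta>]) (auto simp: lm_mult_def)
qed

lemma ls_less_lm_deriv_lm_dag:
  fixes m n :: "'o::wellorder lmono"
  assumes "lm_less m lm_one" and "n \<noteq> lm_one"
  shows "ls_less (lm_deriv m) (lm_dag n)"
proof (rule ls_lessI)
  show "ls_is_lead (lm_deriv m) (lm_mult (ell_dag (lm_lead_index m)) m)"
    using assms(1) by (intro ls_is_lead_lm_deriv) (auto simp: lm_less_def)
  show "ls_is_lead (lm_dag n) (ell_dag (lm_lead_index n))"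
    using assms(2) by (rule ls_is_lead_lm_dag)
  show "lm_less (lm_mult (ell_dag (lm_lead_index m)) m) (ell_dag (lm_lead_index n))"
    using assms(1) by (rule ell_dag_lead_index_mult_less_ell_dag)
qed

lemma ls_less_lm_deriv:
  fixes m n :: "'o::wellorder lmono"
  assumes "lm_less m n" and "n \<noteq> lm_one"
  shows "ls_less (lm_deriv m) (lm_deriv n)"
proof (cases "m = lm_one")
  case True
  then show ?thesis
    using lm_deriv_nonzero[OF assms(2)] by (simp add: ls_less_def lm_deriv_one)
next
  case False
  with assms show ?thesis
    by (intro ls_lessI[OF ls_is_lead_lm_deriv ls_is_lead_lm_deriv ell_dag_lead_index_mult_less])
qed

lemma lsupp_lm_deriv_below:
  assumes "m \<in> lm_below \<alpha>"
  shows "lsupp (lm_deriv m) \<subseteq> {lm_mult (ell_dag \<beta>) m | \<beta>. \<beta> < \<alpha>}"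
  using assms unfolding lsupp_lm_deriv lm_below_def by (auto simp: not_le[symmetric])

theorem lemma3p1:
  fixes m n :: "'o::wellorder lmono" and t :: real and \<alpha> :: 'o
  shows
    "lm_dag (lm_mult m n) = ls_add (lm_dag m) (lm_dag n)
     \<and> lm_dag (lm_pow m t) = ls_scale t (lm_dag m)
     \<and> lm_deriv (lm_mult m n) = ls_add (ls_mult (lm_deriv m) (ls_mono n)) (ls_mult (ls_mono m) (lm_deriv n))
     \<and> (m \<noteq> lm_one \<longrightarrow> lm_deriv m \<noteq> ls_zero \<and> lm_dag m \<noteq> ls_zero)
     \<and> (lm_less m lm_one \<and> n \<noteq> lm_one \<longrightarrow> ls_less (lm_deriv m) (lm_dag n))
     \<and> (lm_less m n \<and> n \<noteq> lm_one \<longrightarrow> ls_less (lm_deriv m) (lm_deriv n))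
     \<and> (m \<in> lm_below \<alpha> \<longrightarrow> lsupp (lm_deriv m) \<subseteq> {lm_mult (ell_dag \<beta>) m | \<beta>. \<beta> < \<alpha>})"
  using lm_dag_mult[of m n] lm_dag_pow[of m t] lm_deriv_mult[of m n]
    lm_deriv_nonzero[of m] lm_dag_nonzero[of m]
    ls_less_lm_deriv_lm_dag[of m n] ls_less_lm_deriv[of m n] lsupp_lm_deriv_below[of m \<alpha>]
  by blast

end
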